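(* Let $g(x)=\sum_{n\ge0}g_nx^n$ be the unique formal power series with $g(0)=1$ satisfying $$g(x)=\frac{1}{1-\frac{x}{1-x}-x^2 g(x)},$$ equivalently $g(x)=\frac{1-2x-\sqrt{1-4x+8x^3-4x^4}}{2x^2(1-x)}$ (so $g_n$ begins $1,1,3,7,19,51,143,407,\dots$). Let $h_n=\det\left(g_{i+j}\right)_{0\le i,j\le n}$ be its Hankel transform. Then for all $n\ge0$, $$h_n=2^{\lfloor (n+1)^2/4\rfloor}.$$ In particular $h_n=4\,h_{n-2}^2/h_{n-4}$ for all $n\ge4$.
   Context: The Hankel transform of a sequence $(g_n)_{n\ge0}$ is the sequence $h_n=\det(g_{i+j})_{0\le i,j\le n}$, $n\ge 0$. *)

theory Defs
  imports "HOL-Computational_Algebra.Formal_Power_Series" "Jordan_Normal_Form.Determinant"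
begin

definition gser :: "real fps" where
  "gser = (THE f. fps_nth f 0 = 1 \<and>
                  f = 1 / (1 - fps_X / (1 - fps_X) - fps_X ^ 2 * f))"

definition gseq :: "nat \<Rightarrow> real" where
  "gseq n = fps_nth gser n"

definition hankel :: "(nat \<Rightarrow> real) \<Rightarrow> nat \<Rightarrow> real" where
  "hankel a n = det (mat (n + 1) (n + 1) (\<lambda>(i, j). a (i + j)))"

end

theory Submission
  imports Defs
begin

text \<open>
  Clearing denominators, g is the root of the quadratic
  x^2 (1-x) g^2 - (1-2x) g + (1-x) = 0 with g(0) = 1, and it expands as the J-fraction
  g = 1 / (1 - x - 2x^2 T),  T = 1 / (1 - x - x^2 g),
  whose level weights are all 1 and whose step weights alternate 2, 1, 2, 1, ....
  For any J-fraction the coefficients are the first column of the Stieltjes table L of weighted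
  Motzkin paths, and the Hankel matrix factors as L B L^T with L unitriangular and
  B = diag(b_0 \<cdots> b_(k-1)).  So h_n = \<Prod>_(k\<le>n) 2^\<lceil>k/2\<rceil> = 2^\<lfloor>(n+1)^2/4\<rfloor>.
\<close>

text \<open>Entry (n, k) is the total weight of Motzkin paths of length n from height 0 to height k,
  where a level step at height k has weight a k, a down step from k+1 to k has weight b k,
  and up steps have weight 1.\<close>

fun stieltjes_table :: "(nat \<Rightarrow> 'a::comm_semiring_1) \<Rightarrow> (nat \<Rightarrow> 'a) \<Rightarrow> nat \<Rightarrow> nat \<Rightarrow> 'a" where
  "stieltjes_table a b 0 k = (if k = 0 then 1 else 0)"
| "stieltjes_table a b (Suc n) k =
     (if k = 0 then 0 else stieltjes_table a b n (k - 1))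
     + a k * stieltjes_table a b n k + b k * stieltjes_table a b n (Suc k)"

lemma stieltjes_table_eq_0: "n < k \<Longrightarrow> stieltjes_table a b n k = 0"
  by (induction n arbitrary: k) auto

lemma stieltjes_table_diag: "stieltjes_table a b n n = 1"
  by (induction n) (auto simp: stieltjes_table_eq_0)

lemma stieltjes_table_gram_Suc:
  fixes a b :: "nat \<Rightarrow> 'a::comm_semiring_1"
  defines "L \<equiv> stieltjes_table a b" and "B \<equiv> \<lambda>k. \<Prod>l<k. b l"
  assumes "Suc i < N"
  shows "(\<Sum>k<N. L (Suc i) k * L j k * B k) = (\<Sum>k<N. L i k * L (Suc j) k * B k)"
proof -
  obtain M where N: "N = Suc M" and "i < M" using assms by (cases N) auto
  then have vanish: "L i M = 0" "L i (Suc M) = 0"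
    by (simp_all add: L_def stieltjes_table_eq_0)
  have B_Suc: "B (Suc k) = B k * b k" for k
    by (simp add: B_def)
  have down: "(\<Sum>k<N. (if k = 0 then 0 else L i (k - 1)) * L j k * B k)
      = (\<Sum>k<N. L i k * (b k * L j (Suc k)) * B k)"
  proof -
    have "(\<Sum>k<N. (if k = 0 then 0 else L i (k - 1)) * L j k * B k)
        = (\<Sum>k<M. L i k * L j (Suc k) * B (Suc k))"
      unfolding N sum.lessThan_Suc_shift by simp
    also have "\<dots> = (\<Sum>k<N. L i k * (b k * L j (Suc k)) * B k)"
      using vanish unfolding N sum.lessThan_Suc by (simp add: B_Suc algebra_simps)
    finally show ?thesis .
  qed
  have up: "(\<Sum>k<N. b k * L i (Suc k) * L j k * B k)
      = (\<Sum>k<N. L i k * (if k = 0 then 0 else L j (k - 1)) * B k)"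
  proof -
    have "(\<Sum>k<N. L i k * (if k = 0 then 0 else L j (k - 1)) * B k)
        = (\<Sum>k<M. L i (Suc k) * L j k * B (Suc k))"
      unfolding N sum.lessThan_Suc_shift by simp
    also have "\<dots> = (\<Sum>k<N. b k * L i (Suc k) * L j k * B k)"
      using vanish unfolding N sum.lessThan_Suc by (simp add: B_Suc algebra_simps)
    finally show ?thesis by simp
  qed
  have "(\<Sum>k<N. L (Suc i) k * L j k * B k)
      = (\<Sum>k<N. (if k = 0 then 0 else L i (k - 1)) * L j k * B k)
        + (\<Sum>k<N. L i k * (a k * L j k) * B k) + (\<Sum>k<N. b k * L i (Suc k) * L j k * B k)"
    unfolding sum.distrib[symmetric] by (rule sum.cong) (simp_all add: L_def algebra_simps)
  also have "\<dots> = (\<Sum>k<N. L i k * L (Suc j) k * B k)"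
    unfolding down up sum.distrib[symmetric] by (rule sum.cong) (simp_all add: L_def algebra_simps)
  finally show ?thesis .
qed

lemma stieltjes_table_gram:
  assumes "i < N"
  shows "(\<Sum>k<N. stieltjes_table a b i k * stieltjes_table a b j k * (\<Prod>l<k. b l))
         = stieltjes_table a b (i + j) 0"
  using assms
proof (induction i arbitrary: j)
  case 0
  then show ?case
    by (cases N) (simp_all only: sum.lessThan_Suc_shift, simp)
next
  case (Suc i)
  then show ?case
    using stieltjes_table_gram_Suc[of i N a b j] Suc.IH[of "Suc j"]
    by (simp del: stieltjes_table.simps)
qed

lemma hankel_stieltjes_table:
  fixes a b :: "nat \<Rightarrow> real"
  shows "hankel (\<lambda>n. stieltjes_table a b n 0) n = (\<Prod>k\<le>n. \<Prod>l<k. b l)"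
proof -
  let ?L = "stieltjes_table a b"
  define A :: "real mat" where "A = mat (n + 1) (n + 1) (\<lambda>(i, k). ?L i k * (\<Prod>l<k. b l))"
  define U :: "real mat" where "U = mat (n + 1) (n + 1) (\<lambda>(k, j). ?L j k)"
  have factor: "mat (n + 1) (n + 1) (\<lambda>(i, j). ?L (i + j) 0) = A * U"
  proof (rule eq_matI)
    fix i j assume "i < dim_row (A * U)" "j < dim_col (A * U)"
    then have ij: "i < n + 1" "j < n + 1"
      by (simp_all add: A_def U_def)
    then have "(A * U) $$ (i, j) = (\<Sum>k<n + 1. ?L i k * ?L j k * (\<Prod>l<k. b l))"
      by (simp add: A_def U_def scalar_prod_def lessThan_atLeast0 algebra_simps)
    also have "\<dots> = ?L (i + j) 0"
      using ij(1) by (rule stieltjes_table_gram)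
    finally show "mat (n + 1) (n + 1) (\<lambda>(i, j). ?L (i + j) 0) $$ (i, j) = (A * U) $$ (i, j)"
      using ij by simp
  qed (simp_all add: A_def U_def)
  have "det A = (\<Prod>k<n + 1. \<Prod>l<k. b l)"
    by (subst det_lower_triangular[of "n + 1"])
      (auto simp: A_def stieltjes_table_eq_0 stieltjes_table_diag prod_list_diag_prod lessThan_atLeast0)
  moreover have "det U = 1"
    by (subst det_upper_triangular[of _ "n + 1"])
      (auto simp: U_def stieltjes_table_eq_0 stieltjes_table_diag prod_list_diag_prod)
  moreover have "det (A * U) = det A * det U"
    by (rule det_mult[of _ "n + 1"]) (simp_all add: A_def U_def)
  ultimately show ?thesis
    unfolding hankel_def factor by (simp add: lessThan_Suc_atMost)
qed

lemma jfraction_coeff_eq_stieltjes_table: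
  fixes F :: "nat \<Rightarrow> 'a::comm_ring_1 fps"
  assumes jfrac: "\<And>k. F k * (1 - fps_const (a k) * fps_X - fps_const (b k) * fps_X^2 * F (Suc k)) = 1"
  shows "fps_nth (F 0) n = stieltjes_table a b n 0"
proof -
  \<comment> \<open>C k generates column k of the table: paths reach height k by their last up step.\<close>
  define C where "C k = fps_X ^ k * (\<Prod>j\<le>k. F j)" for k
  have F_nth_0: "fps_nth (F k) 0 = 1" for k
    using arg_cong[OF jfrac[of k], of "\<lambda>f. fps_nth f 0"] by simp
  have C_rec: "C k = (if k = 0 then 1 else fps_X * C (k - 1))
      + fps_const (a k) * fps_X * C k + fps_const (b k) * fps_X * C (Suc k)" for k
  proof -
    define W where "W = (if k = 0 then 1 else fps_X * C (k - 1))"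
    have "W = fps_X ^ k * (\<Prod>j<k. F j)"
      by (cases k) (simp_all add: W_def C_def lessThan_Suc_atMost algebra_simps)
    then have "C k = W * F k"
      by (simp add: C_def lessThan_Suc_atMost[symmetric] algebra_simps)
    have C_Suc: "C (Suc k) = fps_X * C k * F (Suc k)"
      by (simp add: C_def atMost_Suc algebra_simps)
    from \<open>C k = W * F k\<close> jfrac[of k]
    have "C k * (1 - fps_const (a k) * fps_X - fps_const (b k) * fps_X^2 * F (Suc k)) = W"
      by (metis mult.assoc mult_1_right)
    with C_Suc show ?thesis
      by (simp add: W_def algebra_simps power2_eq_square)
  qed
  have "fps_nth (C k) n = stieltjes_table a b n k" for k
  proof (induction n arbitrary: k)
    case 0
    then show ?case by (simp add: C_def fps_X_power_mult_nth F_nth_0)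
  next
    case (Suc n)
    then show ?case
      by (subst C_rec) (simp add: mult.assoc)
  qed
  from this[of 0] show ?thesis
    by (simp add: C_def)
qed

lemma one_minus_fps_X_neq_0: "(1 - fps_X :: 'a::comm_ring_1 fps) \<noteq> 0"
  by (auto simp: fps_eq_iff dest: spec[of _ 0])

definition g_quadratic :: "real fps \<Rightarrow> real fps" where
  "g_quadratic f = fps_X^2 * (1 - fps_X) * f^2 - (1 - 2 * fps_X) * f + (1 - fps_X)"

lemma fixed_point_iff_g_quadratic:
  fixes f :: "real fps"
  shows "f = 1 / (1 - fps_X / (1 - fps_X) - fps_X^2 * f) \<longleftrightarrow> g_quadratic f = 0"
proof -
  define D where "D = 1 - fps_X / (1 - fps_X) - fps_X^2 * f"
  have D_0: "fps_nth D 0 = 1"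
    by (simp add: D_def fps_divide_unit)
  have "(1 - fps_X) * (f * D) = (1 - 2 * fps_X) * f - fps_X^2 * (1 - fps_X) * f^2"
  proof -
    define i where "i = inverse (1 - fps_X :: real fps)"
    have i: "(1 - fps_X) * i = 1"
      unfolding i_def by (rule inverse_mult_eq_1') simp
    have "(1 - fps_X) * (f * D)
        = (1 - fps_X) * f - fps_X * f * ((1 - fps_X) * i) - fps_X^2 * (1 - fps_X) * f^2"
      by (simp add: D_def i_def fps_divide_unit algebra_simps power2_eq_square)
    then show ?thesis
      unfolding i by (simp add: algebra_simps)
  qed
  then have "g_quadratic f = (1 - fps_X) * (1 - f * D)"
    by (simp add: g_quadratic_def algebra_simps)
  moreover note one_minus_fps_X_neq_0
  ultimately have "f * D = 1 \<longleftrightarrow> g_quadratic f = 0"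
    by simp
  moreover have "f = 1 / D \<longleftrightarrow> f * D = 1"
    using D_0 fps_inverse_unique[of D f] inverse_mult_eq_1[of D]
    by (auto simp: fps_divide_unit mult.commute)
  ultimately show ?thesis
    by (simp add: D_def)
qed

lemma g_quadratic_root_unique:
  assumes "g_quadratic f = 0" and "g_quadratic g = 0"
  shows "f = g"
proof -
  let ?c = "fps_X^2 * (1 - fps_X) * (f + g) - (1 - 2 * fps_X) :: real fps"
  have "(f - g) * ?c = g_quadratic f - g_quadratic g"
    by (simp add: g_quadratic_def algebra_simps power2_eq_square)
  also have "\<dots> = 0"
    using assms by simp
  finally have "(f - g) * ?c = 0" .
  moreover have "?c \<noteq> 0"
  proof
    assume "?c = 0"
    then have "fps_nth ?c 0 = 0"
      by simp
    then show False
      by simp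
  qed
  ultimately show ?thesis
    by simp
qed

lemma discriminant_sqrt_exists:
  "\<exists>S :: real fps. S^2 = 1 - 4 * fps_X + 8 * fps_X^3 - 4 * fps_X^4
     \<and> fps_nth S 0 = 1 \<and> fps_nth S 1 = -2 \<and> fps_nth S 2 = -2"
proof -
  define P :: "real fps" where "P = 1 - 4 * fps_X + 8 * fps_X^3 - 4 * fps_X^4"
  define S where "S = fps_radical (\<lambda>_ _. 1) 2 P"
  have S_sq: "S^2 = P"
    using power_radical[of P "\<lambda>_ _. 1" 1] by (simp add: S_def P_def numeral_2_eq_2)
  have S_0: "fps_nth S 0 = 1"
    by (simp add: S_def P_def)
  have S_1: "fps_nth S 1 = -2"
    using arg_cong[OF S_sq, of "\<lambda>f. fps_nth f 1"]
    by (simp add: power2_eq_square fps_mult_nth S_0 P_def fps_numeral_nth)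
  have "fps_nth S 2 = -2"
    using arg_cong[OF S_sq, of "\<lambda>f. fps_nth f 2"] S_1
    by (simp add: power2_eq_square fps_mult_nth S_0 P_def fps_numeral_nth numeral_2_eq_2)
  with S_sq S_0 S_1 show ?thesis
    unfolding P_def by blast
qed

lemma g_quadratic_root_exists: "\<exists>f. fps_nth f 0 = 1 \<and> g_quadratic f = 0"
proof -
  obtain S :: "real fps" where S_sq: "S^2 = 1 - 4 * fps_X + 8 * fps_X^3 - 4 * fps_X^4"
    and S_0: "fps_nth S 0 = 1" and S_1: "fps_nth S 1 = -2" and S_2: "fps_nth S 2 = -2"
    using discriminant_sqrt_exists by blast
  define N where "N = 1 - 2 * fps_X - S"
  have N_eq: "N = fps_X^2 * fps_shift 2 N"
    by (rule fps_conv_fps_X_power_mult_fps_shift)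
      (use S_0 S_1 in \<open>auto simp: N_def less_2_cases_iff fps_numeral_nth intro!: subdegree_geI\<close>)
  define f where "f = fps_shift 2 N * inverse (fps_const 2 * (1 - fps_X))"
  have f_N: "fps_const 2 * fps_X^2 * (1 - fps_X) * f = N"
  proof -
    define u :: "real fps" where "u = fps_const 2 * (1 - fps_X)"
    have "fps_const 2 * fps_X^2 * (1 - fps_X) * f = fps_X^2 * fps_shift 2 N * (u * inverse u)"
      by (simp add: f_def u_def algebra_simps)
    also have "u * inverse u = 1"
      unfolding u_def by (rule inverse_mult_eq_1') simp
    finally show ?thesis
      using N_eq by simp
  qed
  have "fps_const 4 * fps_X^2 * (1 - fps_X) * g_quadratic f
      = N^2 - 2 * (1 - 2 * fps_X) * N + 4 * fps_X^2 * (1 - fps_X)^2"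
    unfolding f_N[symmetric] g_quadratic_def
    by (simp add: algebra_simps power2_eq_square fps_numeral_fps_const)
  also have "\<dots> = S^2 - (1 - 2 * fps_X)^2 + 4 * fps_X^2 * (1 - fps_X)^2"
    by (simp add: N_def algebra_simps power2_eq_square)
  also have "\<dots> = 0"
    unfolding S_sq by (simp add: algebra_simps power2_eq_square power3_eq_cube power4_eq_xxxx)
  finally have "fps_const 4 * fps_X^2 * (1 - fps_X) * g_quadratic f = 0" .
  moreover have "fps_const 4 * fps_X^2 * (1 - fps_X) \<noteq> (0 :: real fps)"
    by (simp add: one_minus_fps_X_neq_0)
  moreover have "fps_nth f 0 = 1"
    using S_2 by (simp add: f_def N_def fps_numeral_nth numeral_2_eq_2)
  ultimately show ?thesis
    by auto
qed

lemma gser_root: "fps_nth gser 0 = 1 \<and> g_quadratic gser = 0"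
proof -
  have "\<exists>!f. fps_nth f 0 = 1 \<and> g_quadratic f = 0"
    using g_quadratic_root_exists g_quadratic_root_unique by blast
  then show ?thesis
    unfolding gser_def fixed_point_iff_g_quadratic by (rule theI')
qed

lemma g_quadratic_jfraction:
  assumes "g_quadratic f = 0"
  shows "f * (1 - fps_X - 2 * fps_X^2 * inverse (1 - fps_X - fps_X^2 * f)) = 1"
proof -
  define A where "A = 1 - fps_X - fps_X^2 * f"
  have A_0: "fps_nth A 0 = 1"
    by (simp add: A_def)
  have A_inverse: "A * inverse A = 1"
    using A_0 by (simp add: inverse_mult_eq_1')
  have "A * (f * (1 - fps_X - 2 * fps_X^2 * inverse A) - 1)
      = f * (A * (1 - fps_X) - 2 * fps_X^2 * (A * inverse A)) - A"
    by (simp add: algebra_simps)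
  also have "\<dots> = - g_quadratic f"
    unfolding A_inverse by (simp add: A_def g_quadratic_def algebra_simps power2_eq_square)
  finally have "A * (f * (1 - fps_X - 2 * fps_X^2 * inverse A) - 1) = 0"
    using assms by simp
  moreover have "A \<noteq> 0"
    using A_0 by auto
  ultimately show ?thesis
    by (simp add: A_def)
qed

lemma gseq_eq_stieltjes_table:
  "gseq n = stieltjes_table (\<lambda>_. 1) (\<lambda>k. if even k then 2 else 1) n 0"
proof -
  define F where "F k = (if even k then gser else inverse (1 - fps_X - fps_X^2 * gser))" for k :: nat
  have "F k * (1 - fps_const 1 * fps_X
          - fps_const (if even k then 2 else 1) * fps_X^2 * F (Suc k)) = 1" for k
  proof (cases "even k")
    case True
    then show ?thesis
      using g_quadratic_jfraction gser_root by (simp add: F_def fps_numeral_fps_const[symmetric])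
  next
    case False
    then show ?thesis
      by (simp add: F_def inverse_mult_eq_1)
  qed
  from jfraction_coeff_eq_stieltjes_table[where F = F and a = "\<lambda>_. 1"
      and b = "\<lambda>k. if even k then 2 else 1", OF this]
  show ?thesis
    by (simp add: gseq_def F_def)
qed

lemma Suc_square_div_4: "(Suc (Suc n))^2 div 4 = (Suc n)^2 div 4 + n div 2 + 1"
  by (cases "even n") (auto elim!: evenE oddE simp: power2_eq_square algebra_simps)

lemma prod_alternating_2_1: "(\<Prod>l<k. if even l then 2 else 1 :: real) = 2 ^ (Suc k div 2)"
  by (induction k) (auto simp: power_add)

lemma prod_power_2_half: "(\<Prod>k\<le>n. 2 ^ (Suc k div 2) :: real) = 2 ^ ((Suc n)^2 div 4)"
proof (induction n)
  case 0
  then show ?case by simp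
next
  case (Suc n)
  then show ?case
    by (simp add: Suc_square_div_4 power_add)
qed

lemma hankel_gseq: "hankel gseq n = 2 ^ ((n + 1)^2 div 4)"
proof -
  have gseq: "gseq = (\<lambda>n. stieltjes_table (\<lambda>_. 1) (\<lambda>k. if even k then 2 else 1) n 0)"
    using gseq_eq_stieltjes_table by blast
  show ?thesis
    unfolding gseq by (simp add: hankel_stieltjes_table prod_alternating_2_1 prod_power_2_half)
qed

lemma square_div_4_recurrence:
  fixes e :: "nat \<Rightarrow> nat"
  defines "e \<equiv> \<lambda>n. (Suc n)^2 div 4"
  shows "e (m + 4) + e m = 2 + 2 * e (m + 2)"
proof -
  have e_Suc: "e (Suc k) = e k + k div 2 + 1" for k
    unfolding e_def by (rule Suc_square_div_4)
  have "m + 4 = Suc (Suc (Suc (Suc m)))" "m + 2 = Suc (Suc m)"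
    by simp_all
  then show ?thesis
    by (simp only: e_Suc div2_Suc_Suc) simp
qed

theorem mainTheorem2:
  shows "(\<forall>n. hankel gseq n = 2 ^ (((n + 1) ^ 2) div 4)) \<and>
         (\<forall>n\<ge>4. hankel gseq n = 4 * (hankel gseq (n - 2)) ^ 2 / hankel gseq (n - 4))"
proof (intro conjI allI impI)
  fix n :: nat
  show "hankel gseq n = 2 ^ (((n + 1) ^ 2) div 4)"
    by (rule hankel_gseq)
next
  fix n :: nat
  assume "n \<ge> 4"
  then obtain m where n: "n = m + 4"
    using le_Suc_ex by (metis add.commute)
  have "n - 4 = m" and "n - 2 = m + 2"
    by (simp_all add: n)
  then have "hankel gseq n * hankel gseq (n - 4) = 2 ^ (2 + 2 * ((m + 2 + 1)^2 div 4))"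
    using square_div_4_recurrence[of m] by (simp add: hankel_gseq n power_add[symmetric])
  also have "\<dots> = 4 * (hankel gseq (n - 2))^2"
    by (simp add: \<open>n - 2 = m + 2\<close> hankel_gseq power_add power_mult[symmetric] mult.commute)
  finally have "hankel gseq n * hankel gseq (n - 4) = 4 * (hankel gseq (n - 2))^2" .
  then show "hankel gseq n = 4 * (hankel gseq (n - 2)) ^ 2 / hankel gseq (n - 4)"
    by (simp add: hankel_gseq field_simps)
qed

end
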